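(* Let $\{\omega_n\}_{n\ge0}$ be a sequence in $\mathbb{T}$ with the repetition property. Then each of the following sequences has the repetition property: (a) $\{\omega_{n+l}\}_{n\ge0}$ for every $l\in\mathbb{Z}_+$; (b) $\{\omega_{nl}\}_{n\ge0}$ for every $l\in\mathbb{Z}_+$; (c) $\{l\omega_n\}_{n\ge0}$ for every $l\in\mathbb{Z}$. Moreover, the original sequence together with all the sequences listed in (a), (b), (c) have the joint repetition property.
   Context: $\mathbb{T}=\mathbb{R}/\mathbb{Z}$ with metric $\mathrm{dist}(x,y)=\langle x-y\rangle$, where $\langle\tau\rangle=\min\{|\hat\tau-p|:p\in\mathbb{Z}\}$ for any representative $\hat\tau\in\mathbb{R}$ of $\tau$. $\mathbb{Z}_+=\{1,2,\ldots\}$. A sequence $\{\omega_n\}_{n\ge0}$ in a metric space $\Omega$ has the repetition property if for every $\varepsilon>0$ and $r \in \mathbb{Z}_+$ there exists $q \in \mathbb{Z}_+$ such that $\mathrm{dist}(\omega_n,\omega_{n+q}) < \varepsilon$ for $n = 0,1,\ldots, rq$. A family of sequences $\{\omega^{(\gamma)}_n\}_{n\ge0}$ in metric spaces $\Omega^{(\gamma)}$, $\gamma\in\Gamma$, has the joint repetition property if each of them has the repetition property and, for each finite subfamily and each $\varepsilon>0$, $r\in\mathbb{Z}_+$, a single $q\in\mathbb{Z}_+$ can be chosen that works simultaneously for all sequences in the subfamily. *)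

theory Defs
  imports "HOL-Analysis.Analysis"
begin

text \<open>The circle T = R/Z is represented by real representatives; the metric is
  dist(x,y) = <x - y>, where <t> = min { |t - p| : p integer }.  All notions below
  are invariant under the choice of representatives.\<close>

definition tnorm :: "real \<Rightarrow> real" where
  "tnorm t = Inf {\<bar>t - of_int p\<bar> | p. True}"

definition tdist :: "real \<Rightarrow> real \<Rightarrow> real" where
  "tdist x y = tnorm (x - y)"

definition repetition_property :: "('a \<Rightarrow> 'a \<Rightarrow> real) \<Rightarrow> (nat \<Rightarrow> 'a) \<Rightarrow> bool" where
  "repetition_property d w \<longleftrightarrow>
     (\<forall>\<epsilon>>0. \<forall>r::nat. r \<ge> 1 \<longrightarrow>
        (\<exists>q::nat. q \<ge> 1 \<and> (\<forall>n\<le>r*q. d (w n) (w (n+q)) < \<epsilon>)))"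

definition joint_repetition_property :: "('a \<Rightarrow> 'a \<Rightarrow> real) \<Rightarrow> (nat \<Rightarrow> 'a) set \<Rightarrow> bool" where
  "joint_repetition_property d S \<longleftrightarrow>
     (\<forall>w\<in>S. repetition_property d w) \<and>
     (\<forall>F. F \<subseteq> S \<longrightarrow> finite F \<longrightarrow>
        (\<forall>\<epsilon>>0. \<forall>r::nat. r \<ge> 1 \<longrightarrow>
           (\<exists>q::nat. q \<ge> 1 \<and> (\<forall>w\<in>F. \<forall>n\<le>r*q. d (w n) (w (n+q)) < \<epsilon>))))"

end

theory Submission
  imports Defs
begin

(* The circle norm <t> is subadditive and satisfies <k t> <= |k| <t> for
   integers k.  Hence, if the q-steps of w are small on a long window [0, R q], then the
   q-steps of every derived sequence of "order" at most N -- a shift w(n + l), a dilation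
   w(n l) or a multiple l w(n) with l <= N -- are small on [0, r q], provided R = (r + 1) N:
   a shift only moves the window, a dilation step telescopes into l steps of w, and a
   multiple enlarges a step at most |l| times.  So one q serves all derived sequences of
   order at most N.  Any finite family of derived sequences has a common order bound,
   which gives the joint repetition property of the family of all derived sequences; the
   theorem follows since the family in the statement is contained in it. *)

lemma tnorm_nonneg: "0 \<le> tnorm t"
  unfolding tnorm_def by (rule cInf_greatest) auto

lemma tnorm_le: "tnorm t \<le> \<bar>t - of_int p\<bar>"
  unfolding tnorm_def by (rule cInf_lower) (auto intro!: bdd_belowI[where m=0])

lemma tnorm_approx:
  assumes "e > 0" shows "\<exists>p::int. \<bar>t - of_int p\<bar> < tnorm t + e"
proof (rule ccontr)
  assume "\<not> ?thesis"
  hence "\<forall>p::int. tnorm t + e \<le> \<bar>t - of_int p\<bar>" by (auto simp: not_less)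
  hence "tnorm t + e \<le> tnorm t" unfolding tnorm_def
    by (intro cInf_greatest) auto
  with assms show False by simp
qed

lemma tnorm_add: "tnorm (a + b) \<le> tnorm a + tnorm b"
proof (rule field_le_epsilon)
  fix e :: real assume "e > 0"
  then obtain p q :: int where p: "\<bar>a - of_int p\<bar> < tnorm a + e/2"
    and q: "\<bar>b - of_int q\<bar> < tnorm b + e/2"
    using tnorm_approx[of "e/2"] by (metis half_gt_zero)
  have "tnorm (a + b) \<le> \<bar>a + b - of_int (p + q)\<bar>" by (rule tnorm_le)
  also have "\<dots> \<le> \<bar>a - of_int p\<bar> + \<bar>b - of_int q\<bar>" by simp
  finally show "tnorm (a + b) \<le> tnorm a + tnorm b + e" using p q by simp
qed

lemma tnorm_mult: "tnorm (of_int k * x) \<le> \<bar>of_int k\<bar> * tnorm x"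
proof (rule field_le_epsilon)
  fix e :: real assume e: "e > 0"
  define e' where "e' = e / (\<bar>of_int k\<bar> + 1)"
  have e': "e' > 0" using e by (simp add: e'_def)
  obtain p :: int where p: "\<bar>x - of_int p\<bar> < tnorm x + e'"
    using tnorm_approx[OF e'] by blast
  have "tnorm (of_int k * x) \<le> \<bar>of_int k * x - of_int (k * p)\<bar>" by (rule tnorm_le)
  also have "\<dots> = \<bar>of_int k\<bar> * \<bar>x - of_int p\<bar>"
    by (simp add: abs_mult[symmetric] right_diff_distrib)
  also have "\<dots> \<le> \<bar>of_int k\<bar> * (tnorm x + e')"
    using p by (intro mult_left_mono) auto
  also have "\<dots> = \<bar>of_int k\<bar> * tnorm x + \<bar>of_int k\<bar> * e'" by (simp add: algebra_simps)
  also have "\<bar>of_int k\<bar> * e' \<le> e"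
    using e by (simp add: e'_def field_simps)
  finally show "tnorm (of_int k * x) \<le> \<bar>of_int k\<bar> * tnorm x + e" by simp
qed

lemma tdist_triangle: "tdist x z \<le> tdist x y + tdist y z"
  using tnorm_add[of "x - y" "y - z"] by (simp add: tdist_def)

lemma tdist_scale: "tdist (of_int l * x) (of_int l * y) \<le> \<bar>of_int l\<bar> * tdist x y"
  using tnorm_mult[of l "x - y"] by (simp add: tdist_def right_diff_distrib)

lemma tdist_telescope:
  fixes w :: "nat \<Rightarrow> real"
  assumes "\<forall>j<k. tdist (w (m + j*q)) (w (m + j*q + q)) \<le> e"
  shows "tdist (w m) (w (m + k*q)) \<le> real k * e"
  using assms
proof (induction k)
  case 0
  show ?case using tnorm_le[of 0 0] by (simp add: tdist_def)
next
  case (Suc k)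
  have "tdist (w m) (w (m + Suc k * q))
      \<le> tdist (w m) (w (m + k*q)) + tdist (w (m + k*q)) (w (m + k*q + q))"
    using tdist_triangle[of "w m" "w (m + Suc k * q)" "w (m + k*q)"] by (simp add: algebra_simps)
  moreover have "tdist (w (m + k*q)) (w (m + k*q + q)) \<le> e" using Suc.prems by simp
  moreover have "tdist (w m) (w (m + k*q)) \<le> real k * e" using Suc by simp
  ultimately show ?case by (simp add: algebra_simps)
qed

text \<open>A q-step of the dilated sequence w(n l) is l steps of w, all inside the window.\<close>
lemma tdist_dilated_step:
  fixes w :: "nat \<Rightarrow> real"
  assumes steps: "\<forall>n\<le>M. tdist (w n) (w (n + q)) \<le> e" and in_window: "n*l + l*q \<le> M"
  shows "tdist (w (n*l)) (w ((n + q)*l)) \<le> real l * e"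
proof -
  have "\<forall>j<l. tdist (w (n*l + j*q)) (w (n*l + j*q + q)) \<le> e"
  proof (intro allI impI)
    fix j assume "j < l"
    then have "j*q \<le> l*q" by simp
    then have "n*l + j*q \<le> M" using in_window by linarith
    with steps show "tdist (w (n*l + j*q)) (w (n*l + j*q + q)) \<le> e" by blast
  qed
  from tdist_telescope[OF this] show ?thesis by (simp add: algebra_simps)
qed

definition derived :: "(nat \<Rightarrow> real) \<Rightarrow> nat \<Rightarrow> (nat \<Rightarrow> real) \<Rightarrow> bool" where
  "derived w N v \<longleftrightarrow> (\<exists>l. 1 \<le> l \<and> l \<le> N \<and> v = (\<lambda>n. w (n + l)))
     \<or> (\<exists>l. 1 \<le> l \<and> l \<le> N \<and> v = (\<lambda>n. w (n * l)))
     \<or> (\<exists>l::int. \<bar>l\<bar> \<le> int N \<and> v = (\<lambda>n. of_int l * w n))"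

lemma derivedE [consumes 1, case_names shift dilation multiple]:
  assumes "derived w N v"
  obtains (shift) l where "1 \<le> l" "l \<le> N" "v = (\<lambda>n. w (n + l))"
    | (dilation) l where "1 \<le> l" "l \<le> N" "v = (\<lambda>n. w (n * l))"
    | (multiple) l where "\<bar>l\<bar> \<le> int N" "v = (\<lambda>n. of_int l * w n)"
  using assms unfolding derived_def by blast

lemma derived_mono:
  assumes v: "derived w N v" and NM: "N \<le> M" shows "derived w M v"
  using v
proof (cases rule: derivedE)
  case (shift l)
  with NM show ?thesis unfolding derived_def by (intro disjI1 exI[of _ l]) simp
next
  case (dilation l)
  with NM show ?thesis unfolding derived_def by (intro disjI2 disjI1 exI[of _ l]) simp
next
  case (multiple l)
  with NM show ?thesis unfolding derived_def by (intro disjI2 exI[of _ l]) simp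
qed

lemma derived_window:
  fixes w v :: "nat \<Rightarrow> real"
  assumes steps: "\<forall>n\<le>(r + 1)*N*q. tdist (w n) (w (n + q)) < e"
    and q: "q \<ge> 1" and e: "e \<ge> 0" and v: "derived w N v" and n: "n \<le> r*q"
  shows "tdist (v n) (v (n + q)) \<le> real N * e"
proof -
  have steps_le: "\<forall>n\<le>(r + 1)*N*q. tdist (w n) (w (n + q)) \<le> e"
    using steps by (simp add: less_imp_le)
  have rq_le: "r*q \<le> r*q*N" if "N \<ge> 1" using that by simp
  have window_split: "(r + 1)*N*q = r*q*N + N*q" by (simp add: algebra_simps)
  from v show ?thesis
  proof (cases rule: derivedE)
    case (shift l)
    have "l \<le> N*q" using q shift by (metis le_trans mult_le_mono2 mult.right_neutral)
    moreover have "n \<le> r*q*N" using n shift rq_le by linarith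
    ultimately have "n + l \<le> (r + 1)*N*q" using window_split by linarith
    then have "tdist (w (n + l)) (w (n + l + q)) \<le> e" using steps_le by blast
    then have "tdist (v n) (v (n + q)) \<le> e" using shift by (simp add: ac_simps)
    also have "e \<le> real N * e" using shift e by (simp add: mult_le_cancel_right1)
    finally show ?thesis .
  next
    case (dilation l)
    have "n*l \<le> r*q*N" using n dilation by (intro mult_le_mono) auto
    moreover have "l*q \<le> N*q" using dilation by simp
    ultimately have "n*l + l*q \<le> (r + 1)*N*q" using window_split by linarith
    from tdist_dilated_step[OF steps_le this]
    have "tdist (v n) (v (n + q)) \<le> real l * e" using dilation by simp
    also have "\<dots> \<le> real N * e" using dilation e by (simp add: mult_right_mono)
    finally show ?thesis .
  next
    case (multiple l)
    have "n \<le> (r + 1)*N*q" if "N \<ge> 1"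
      using n rq_le[OF that] window_split by linarith
    then have step: "N \<ge> 1 \<Longrightarrow> tdist (w n) (w (n + q)) \<le> e" using steps_le by blast
    have "tdist (v n) (v (n + q)) \<le> \<bar>of_int l\<bar> * tdist (w n) (w (n + q))"
      using multiple tdist_scale by simp
    also have "\<dots> \<le> real N * e"
    proof (cases "N = 0")
      case True then show ?thesis using multiple by simp
    next
      case False
      have "\<bar>real_of_int l\<bar> \<le> real N" using multiple by linarith
      then show ?thesis using step False e tnorm_nonneg
        by (intro mult_mono) (auto simp: tdist_def)
    qed
    finally show ?thesis .
  qed
qed

lemma derived_common_period:
  fixes w :: "nat \<Rightarrow> real"
  assumes rep: "repetition_property tdist w" and \<epsilon>: "\<epsilon> > 0" and r: "r \<ge> 1"
  shows "\<exists>q\<ge>1. \<forall>v. derived w N v \<longrightarrow> (\<forall>n\<le>r*q. tdist (v n) (v (n + q)) < \<epsilon>)"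
proof -
  define e where "e = \<epsilon> / (real N + 1)"
  have e: "e > 0" and Ne: "real N * e < \<epsilon>"
    using \<epsilon> by (simp_all add: e_def field_simps)
  have "(r + 1)*N + 1 \<ge> 1" by simp
  then obtain q where q: "q \<ge> 1"
    and long_steps: "\<forall>n\<le>((r + 1)*N + 1)*q. tdist (w n) (w (n + q)) < e"
    using rep e unfolding repetition_property_def by blast
  have steps: "\<forall>n\<le>(r + 1)*N*q. tdist (w n) (w (n + q)) < e"
  proof (intro allI impI)
    fix n assume "n \<le> (r + 1)*N*q"
    also have "\<dots> \<le> ((r + 1)*N + 1)*q" by simp
    finally show "tdist (w n) (w (n + q)) < e" using long_steps by blast
  qed
  have "tdist (v n) (v (n + q)) < \<epsilon>" if "derived w N v" "n \<le> r*q" for v n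
    using derived_window[OF steps q _ that] e Ne by linarith
  with q show ?thesis by blast
qed

lemma derived_finite_bound:
  "finite F \<Longrightarrow> \<forall>v\<in>F. \<exists>N. derived w N v \<Longrightarrow> \<exists>N. \<forall>v\<in>F. derived w N v"
proof (induction F rule: finite_induct)
  case (insert x F)
  then obtain N M where "\<forall>v\<in>F. derived w N v" "derived w M x" by auto
  then have "\<forall>v\<in>insert x F. derived w (max N M) v"
    by (metis derived_mono insert_iff max.cobounded1 max.cobounded2)
  then show ?case by blast
qed simp

lemma joint_repetition_property_subset:
  "joint_repetition_property d S \<Longrightarrow> T \<subseteq> S \<Longrightarrow> joint_repetition_property d T"
  unfolding joint_repetition_property_def by blast

lemma derived_joint_repetition:
  fixes w :: "nat \<Rightarrow> real"
  assumes rep: "repetition_property tdist w"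
  shows "joint_repetition_property tdist {v. \<exists>N. derived w N v}"
proof -
  have common: "\<exists>q\<ge>1. \<forall>v\<in>F. \<forall>n\<le>r*q. tdist (v n) (v (n + q)) < \<epsilon>"
    if F: "F \<subseteq> {v. \<exists>N. derived w N v}" and fin: "finite F"
      and \<epsilon>: "\<epsilon> > 0" and r: "r \<ge> 1" for F \<epsilon> r
  proof -
    have "\<forall>v\<in>F. \<exists>N. derived w N v" using F by blast
    then obtain N where "\<forall>v\<in>F. derived w N v" using derived_finite_bound[OF fin] by blast
    with derived_common_period[OF rep \<epsilon> r, of N] show ?thesis by blast
  qed
  have "repetition_property tdist v" if "v \<in> {v. \<exists>N. derived w N v}" for v
    unfolding repetition_property_def
  proof (intro allI impI)
    fix \<epsilon> :: real and r :: nat assume "\<epsilon> > 0" "r \<ge> 1"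
    with common[of "{v}" \<epsilon> r] that show "\<exists>q\<ge>1. \<forall>n\<le>r*q. tdist (v n) (v (n + q)) < \<epsilon>"
      by simp
  qed
  with common show ?thesis unfolding joint_repetition_property_def by blast
qed

theorem lemma3p1:
  fixes \<omega> :: "nat \<Rightarrow> real"
  assumes "repetition_property tdist \<omega>"
  shows "(\<forall>l::nat. l \<ge> 1 \<longrightarrow> repetition_property tdist (\<lambda>n. \<omega> (n + l)))
    \<and> (\<forall>l::nat. l \<ge> 1 \<longrightarrow> repetition_property tdist (\<lambda>n. \<omega> (n * l)))
    \<and> (\<forall>l::int. repetition_property tdist (\<lambda>n. of_int l * \<omega> n))
    \<and> joint_repetition_property tdist
        ({\<omega>}
         \<union> {(\<lambda>n. \<omega> (n + l)) | l::nat. l \<ge> 1}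
         \<union> {(\<lambda>n. \<omega> (n * l)) | l::nat. l \<ge> 1}
         \<union> {(\<lambda>n. of_int l * \<omega> n) | l::int. True})"
  (is "?a \<and> ?b \<and> ?c \<and> joint_repetition_property tdist ?S")
proof -
  have "?S \<subseteq> {v. \<exists>N. derived \<omega> N v}"
  proof
    fix v assume "v \<in> ?S"
    then consider "v = (\<lambda>n. \<omega> (n * 1))"
      | (shift) l where "l \<ge> 1" "v = (\<lambda>n. \<omega> (n + l))"
      | (dilation) l where "l \<ge> 1" "v = (\<lambda>n. \<omega> (n * l))"
      | (multiple) l where "v = (\<lambda>n. of_int l * \<omega> n)"
      by auto
    then have "\<exists>N. derived \<omega> N v"
    proof cases
      case 1
      then have "derived \<omega> 1 v" unfolding derived_def by (intro disjI2 disjI1 exI[of _ 1]) simp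
      then show ?thesis ..
    next
      case (shift l)
      then have "derived \<omega> l v" unfolding derived_def by (intro disjI1 exI[of _ l]) simp
      then show ?thesis ..
    next
      case (dilation l)
      then have "derived \<omega> l v" unfolding derived_def by (intro disjI2 disjI1 exI[of _ l]) simp
      then show ?thesis ..
    next
      case (multiple l)
      then have "derived \<omega> (nat \<bar>l\<bar>) v" unfolding derived_def by (intro disjI2 exI[of _ l]) simp
      then show ?thesis ..
    qed
    then show "v \<in> {v. \<exists>N. derived \<omega> N v}" by simp
  qed
  with derived_joint_repetition[OF assms]
  have joint: "joint_repetition_property tdist ?S" by (rule joint_repetition_property_subset)
  then have "\<forall>v\<in>?S. repetition_property tdist v"
    unfolding joint_repetition_property_def by blast
  with joint show ?thesis by blast
qed

end
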